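(* Let $X$ be an $n$-globular set, $k\le n$, and let $D\in T_n^{D^s}(X)_k$ be a labelled simple $k$-string diagram which is nontrivial and not a block. Then there is a unique element $y\in T_n^{D^s}(T_n^{D^s}(X))_k$ whose underlying diagram is a block $B$ and whose minimal labels are $D_1,\dots,D_\ell\in T_n^{D^s}(X)$, such that $\mu_X(y)=D$, each $D_j$ is nontrivial, $m(B)=M(D)$, $M(D_j)<M(D)$ for all $j$, and $\ell=\ell_{M(D)}(D)$.
   Context: An $n$-globular set $X$: sets $X_0,\dots,X_n$ and maps $s,t\colon X_k\to X_{k-1}$ with $ss=st$, $ts=tt$. $\langle\ell\rangle=\{1<\dots<\ell\}$. A simple $k$-string diagram $D$: numbers $\ell_0=1,\ell_1,\dots,\ell_k\ge0$ and arbitrary functions $v^m\colon\langle\ell_m\rangle\to\langle\ell_{m-1}\rangle$; its source and target are both $(v^1,\dots,v^{k-1})$. An $X$-labelling of $D$: elements $x^m_i\in X_m$ ($0\le m\le k$, $1\le i\le\ell_m$) such that for $m\ge1$, $s(x^m_i)=x^{m-1}_{v^m(i)}$ if $i=\min\{j:v^m(j)=v^m(i)\}$ and otherwise $s(x^m_i)=t(x^m_p)$ with $p=\max\{j<i:v^m(j)=v^m(i)\}$. The source of $(D,x)$ is $(s(D),(x^m_i)_{m\le k-1})$; its target is the same except that for $i\in\mathrm{im}(v^k)$ the label $x^{k-1}_i$ is replaced by $t(x^k_p)$, $p=\max\{j:v^k(j)=i\}$. $T_n^{D^s}(X)_k$ is the set of $X$-labelled simple $k$-string diagrams; with these source/target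 maps it is an $n$-globular set. The multiplication $\mu_X\colon T_n^{D^s}(T_n^{D^s}(X))\to T_n^{D^s}(X)$: if a $k$-diagram $D$ is labelled by labelled $m$-diagrams $E^m_i$ with underlying diagrams $D^m_i$ (compatibility forces $\ell_j(D^m_i)=\ell_j(D^{m-1}_{v^m(i)})$, $v^j(D^m_i)=v^j(D^{m-1}_{v^m(i)})$ for $j<m$), the composite has level-$m$ set $\coprod_{i=1}^{\ell_m}\langle\ell_m(D^m_i)\rangle$, ordered by component index first and then internally, with map to level $m-1$ sending $a$ in component $i$ to $v^m(D^m_i)(a)$ in component $v^m(i)$, and with $a$ in component $i$ at level $m$ labelled by the $m$-dimensional label at $a$ of $E^m_i$. All notions below for labelled diagrams refer to the underlying diagram. A $k$-diagram $D$ is nondegenerate if $\ell_i(D)>0$ for all $1\le i\le k$, and nontrivial if it is nondegenerate and $\ell_i(D)>1$ for some $i$. For nontrivial $D$: $m(D)=\min\{j:\ell_j(D)>1\}$, $M(D)=\max\{j:\ell_j(D)>1\}$. A block is a nontrivial $D$ with $m(D)=M(D)$. The blocks are exactly: $B^k(i,\ell,p)$ for $1\le i<k$, $\ell>1$, $1\le p\le\ell$, with $\ell_i=\ell$, $\ell_j=1$ for $j\ne i$, $v^{i+1}=(p)$ (all other maps constant); and $B^k(k,\ell)$ for $\ell>1$, with $\ell_k=\ell$ and $\ell_j=1$ for $j<k$. A labelling of a block is determined by its minimal labels $x_1,\dots,x_\ell$: for $B^k(i,\ell,p)$, $x_j=x^i_j$ for $j\ne p$ and $x_p=x^k_1$;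 for $B^k(k,\ell)$, $x_j=x^k_j$. *)

theory Defs
  imports Main
begin

record 'a gset =
  cells :: "nat \<Rightarrow> 'a set"
  src :: "nat \<Rightarrow> 'a \<Rightarrow> 'a"
  tgt :: "nat \<Rightarrow> 'a \<Rightarrow> 'a"

definition globular :: "nat \<Rightarrow> 'a gset \<Rightarrow> bool" where
  "globular n X \<longleftrightarrow>
     (\<forall>k\<in>{1..n}. \<forall>x\<in>cells X k. src X k x \<in> cells X (k - 1) \<and> tgt X k x \<in> cells X (k - 1)) \<and>
     (\<forall>k\<in>{2..n}. \<forall>x\<in>cells X k.
        src X (k - 1) (src X k x) = src X (k - 1) (tgt X k x) \<and>
        tgt X (k - 1) (src X k x) = tgt X (k - 1) (tgt X k x))"

text \<open>A labelled simple k-string diagram: dimension k, numbers len m = l_m,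
  maps vmap m : <l_m> -> <l_(m-1)>, labels lab m i = x^m_i. Positions are 1-based.
  Outside the meaningful range the data are fixed to canonical defaults
  (len = 0, vmap = 0, lab = undefined), so that equality of records is equality of
  labelled diagrams.\<close>

record 'a ldiag =
  dim :: nat
  len :: "nat \<Rightarrow> nat"
  vmap :: "nat \<Rightarrow> nat \<Rightarrow> nat"
  lab :: "nat \<Rightarrow> nat \<Rightarrow> 'a"

definition canonical :: "'a ldiag \<Rightarrow> bool" where
  "canonical D \<longleftrightarrow>
     len D 0 = 1 \<and>
     (\<forall>m. dim D < m \<longrightarrow> len D m = 0) \<and>
     (\<forall>m i. \<not> (1 \<le> m \<and> m \<le> dim D \<and> 1 \<le> i \<and> i \<le> len D m) \<longrightarrow> vmap D m i = 0) \<and>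
     (\<forall>m i. \<not> (m \<le> dim D \<and> 1 \<le> i \<and> i \<le> len D m) \<longrightarrow> lab D m i = undefined)"

definition diag_ok :: "'a ldiag \<Rightarrow> bool" where
  "diag_ok D \<longleftrightarrow> canonical D \<and>
     (\<forall>m\<in>{1..dim D}. \<forall>i\<in>{1..len D m}. vmap D m i \<in> {1..len D (m - 1)})"

definition labelling_ok :: "'b gset \<Rightarrow> 'b ldiag \<Rightarrow> bool" where
  "labelling_ok X D \<longleftrightarrow>
     (\<forall>m\<le>dim D. \<forall>i\<in>{1..len D m}. lab D m i \<in> cells X m) \<and>
     (\<forall>m\<in>{1..dim D}. \<forall>i\<in>{1..len D m}.
        (let P = {j\<in>{1..<i}. vmap D m j = vmap D m i} in
          if P = {} then src X m (lab D m i) = lab D (m - 1) (vmap D m i)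
          else src X m (lab D m i) = tgt X m (lab D m (Max P))))"

definition lwf :: "'b gset \<Rightarrow> nat \<Rightarrow> 'b ldiag \<Rightarrow> bool" where
  "lwf X k D \<longleftrightarrow> dim D = k \<and> diag_ok D \<and> labelling_ok X D"

definition dsrc :: "'b ldiag \<Rightarrow> 'b ldiag" where
  "dsrc D = \<lparr> dim = dim D - 1,
              len = (\<lambda>m. if m < dim D then len D m else 0),
              vmap = (\<lambda>m i. if m < dim D then vmap D m i else 0),
              lab = (\<lambda>m i. if m < dim D then lab D m i else undefined) \<rparr>"

definition dtgt :: "'b gset \<Rightarrow> 'b ldiag \<Rightarrow> 'b ldiag" where
  "dtgt X D = \<lparr> dim = dim D - 1,
              len = (\<lambda>m. if m < dim D then len D m else 0),
              vmap = (\<lambda>m i. if m < dim D then vmap D m i else 0),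
              lab = (\<lambda>m i. if m < dim D then
                        (if m = dim D - 1 \<and> i \<in> vmap D (dim D) ` {1..len D (dim D)}
                         then tgt X (dim D) (lab D (dim D)
                                (Max {j\<in>{1..len D (dim D)}. vmap D (dim D) j = i}))
                         else lab D m i)
                      else undefined) \<rparr>"

text \<open>The n-globular set T_n^{D^s}(X) (levels above n are irrelevant).\<close>
definition TD :: "'b gset \<Rightarrow> 'b ldiag gset" where
  "TD X = \<lparr> cells = (\<lambda>k. {D. lwf X k D}), src = (\<lambda>k D. dsrc D), tgt = (\<lambda>k D. dtgt X D) \<rparr>"

definition off :: "'b ldiag ldiag \<Rightarrow> nat \<Rightarrow> nat \<Rightarrow> nat" where
  "off E m i = (\<Sum>i'\<in>{1..<i}. len (lab E m i') m)"

definition comp :: "'b ldiag ldiag \<Rightarrow> nat \<Rightarrow> nat \<Rightarrow> nat" where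
  "comp E m g = (LEAST i. g \<le> off E m (Suc i))"

definition inner :: "'b ldiag ldiag \<Rightarrow> nat \<Rightarrow> nat \<Rightarrow> nat" where
  "inner E m g = g - off E m (comp E m g)"

definition mu :: "'b ldiag ldiag \<Rightarrow> 'b ldiag" where
  "mu E = \<lparr> dim = dim E,
            len = (\<lambda>m. if m \<le> dim E then off E m (Suc (len E m)) else 0),
            vmap = (\<lambda>m g. if 1 \<le> m \<and> m \<le> dim E \<and> 1 \<le> g \<and> g \<le> off E m (Suc (len E m))
                     then off E (m - 1) (vmap E m (comp E m g))
                          + vmap (lab E m (comp E m g)) m (inner E m g)
                     else 0),
            lab = (\<lambda>m g. if m \<le> dim E \<and> 1 \<le> g \<and> g \<le> off E m (Suc (len E m))
                     then lab (lab E m (comp E m g)) m (inner E m g)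
                     else undefined) \<rparr>"

definition nondegenerate :: "'b ldiag \<Rightarrow> bool" where
  "nondegenerate D \<longleftrightarrow> (\<forall>i\<in>{1..dim D}. 0 < len D i)"

definition nontrivial :: "'b ldiag \<Rightarrow> bool" where
  "nontrivial D \<longleftrightarrow> nondegenerate D \<and> (\<exists>i\<in>{1..dim D}. 1 < len D i)"

definition mlev :: "'b ldiag \<Rightarrow> nat" where
  "mlev D = Min {j. 1 < len D j}"

definition Mlev :: "'b ldiag \<Rightarrow> nat" where
  "Mlev D = Max {j. 1 < len D j}"

definition is_block :: "'b ldiag \<Rightarrow> bool" where
  "is_block D \<longleftrightarrow> nontrivial D \<and> mlev D = Mlev D"

text \<open>Minimal labels x_1..x_l of a labelled block (l = len at level M):
  for B^k(i,l,p) with i<k, x_p = x^k_1 and x_j = x^i_j otherwise;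
  for B^k(k,l), x_j = x^k_j.\<close>
definition minlab :: "'b ldiag \<Rightarrow> nat \<Rightarrow> 'b" where
  "minlab B j = (if Mlev B < dim B \<and> j = vmap B (Suc (Mlev B)) 1
                 then lab B (dim B) 1 else lab B (Mlev B) j)"

end

theory Submission
  imports Defs
begin

text \<open>Let \<open>M = M(D)\<close> and let \<open>L \<ge> 2\<close> be the number of \<open>M\<close>-cells of \<open>D\<close>.
  Cutting \<open>D\<close> at its \<open>M\<close>-cells gives \<open>L\<close> factors: the \<open>i\<close>-th keeps only the \<open>i\<close>-th
  \<open>M\<close>-cell, its \<open>(M - 1)\<close>-cells carry the labels left behind by the earlier \<open>M\<close>-cells,
  and the factor on which the cells above \<open>M\<close> sit (the \<open>p\<close>-th) keeps them. Used as minimal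
  labels of the block \<open>B\<^sup>k(M, L, p)\<close> they compose back to \<open>D\<close>; as \<open>D\<close> is not a block, its
  level \<open>m(D) < M\<close> survives in every factor, so the factors are nontrivial with \<open>M(D\<^sub>i) < M\<close>.

  Conversely, for any such \<open>y\<close> the \<open>L\<close> labels at level \<open>M\<close> contribute \<open>L\<close> cells to
  \<open>\<mu>(y) = D\<close> and, being nontrivial, at least one each, hence exactly one. So \<open>y\<close> has the
  same shape as the block above, the top-dimensional data of its labels are read off \<open>D\<close>, and
  the remaining data of the labels are forced by the source conditions.\<close>

lemma sum_eq_card_imp_eq_1:
  fixes f :: "'a \<Rightarrow> nat"
  assumes "finite A" "\<forall>a\<in>A. 1 \<le> f a" "sum f A = card A" "a \<in> A"
  shows "f a = 1"
proof (rule ccontr)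
  assume "f a \<noteq> 1"
  then have "1 < f a" using assms by auto
  then have "sum (\<lambda>_. 1) A < sum f A"
    using assms by (intro sum_strict_mono_ex1) auto
  then show False using assms(3) by simp
qed

lemma TD_simps [simp]:
  "cells (TD X) k = {D. lwf X k D}" "src (TD X) k E = dsrc E" "tgt (TD X) k E = dtgt X E"
  by (simp_all add: TD_def)

lemma dsrc_simps [simp]:
  "dim (dsrc E) = dim E - 1"
  "len (dsrc E) m = (if m < dim E then len E m else 0)"
  "vmap (dsrc E) m i = (if m < dim E then vmap E m i else 0)"
  "lab (dsrc E) m i = (if m < dim E then lab E m i else undefined)"
  by (simp_all add: dsrc_def)

lemma lwfD:
  assumes "lwf X k D"
  shows "dim D = k" "canonical D" "diag_ok D" "labelling_ok X D"
  using assms by (auto simp: lwf_def diag_ok_def)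

lemma canonicalD:
  assumes "canonical D"
  shows "len D 0 = 1" "dim D < m \<Longrightarrow> len D m = 0"
    "\<not> (1 \<le> m \<and> m \<le> dim D \<and> 1 \<le> i \<and> i \<le> len D m) \<Longrightarrow> vmap D m i = 0"
    "\<not> (m \<le> dim D \<and> 1 \<le> i \<and> i \<le> len D m) \<Longrightarrow> lab D m i = undefined"
  using assms unfolding canonical_def by auto

lemma diag_ok_vmap_range:
  assumes "diag_ok D" "1 \<le> m" "m \<le> dim D" "1 \<le> i" "i \<le> len D m"
  shows "1 \<le> vmap D m i" "vmap D m i \<le> len D (m - 1)"
  using assms unfolding diag_ok_def by auto

lemma labelling_ok_cells:
  assumes "labelling_ok X D" "m \<le> dim D" "1 \<le> i" "i \<le> len D m"
  shows "lab D m i \<in> cells X m"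
  using assms unfolding labelling_ok_def by auto

lemma labelling_ok_src:
  assumes "labelling_ok X D" "1 \<le> m" "m \<le> dim D" "1 \<le> i" "i \<le> len D m"
    and "P = {j\<in>{1..<i}. vmap D m j = vmap D m i}"
  shows "src X m (lab D m i) =
    (if P = {} then lab D (m - 1) (vmap D m i) else tgt X m (lab D m (Max P)))"
  using assms unfolding labelling_ok_def Let_def by auto

lemma labelling_okI:
  assumes "\<And>m i. m \<le> dim D \<Longrightarrow> 1 \<le> i \<Longrightarrow> i \<le> len D m \<Longrightarrow> lab D m i \<in> cells X m"
    and "\<And>m i P. 1 \<le> m \<Longrightarrow> m \<le> dim D \<Longrightarrow> 1 \<le> i \<Longrightarrow> i \<le> len D m \<Longrightarrow>
      P = {j\<in>{1..<i}. vmap D m j = vmap D m i} \<Longrightarrow>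
      src X m (lab D m i) =
        (if P = {} then lab D (m - 1) (vmap D m i) else tgt X m (lab D m (Max P)))"
  shows "labelling_ok X D"
  unfolding labelling_ok_def Let_def
proof (intro conjI ballI allI impI)
  fix m i assume "m \<in> {1..dim D}" "i \<in> {1..len D m}"
  then show "if {j \<in> {1..<i}. vmap D m j = vmap D m i} = {}
      then src X m (lab D m i) = lab D (m - 1) (vmap D m i)
      else src X m (lab D m i) = tgt X m (lab D m (Max {j \<in> {1..<i}. vmap D m j = vmap D m i}))"
    using assms(2)[of m i "{j \<in> {1..<i}. vmap D m j = vmap D m i}"] by auto
qed (use assms(1) in auto)

lemma canonical_eq_by_dsrc:
  assumes can: "canonical E1" "canonical E2" and dim: "dim E1 = j" "dim E2 = j"
    and src_eq: "0 < j \<Longrightarrow> dsrc E1 = dsrc E2" and len_top: "len E1 j = len E2 j"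
    and top: "\<And>b. 1 \<le> b \<Longrightarrow> b \<le> len E1 j \<Longrightarrow>
      (0 < j \<longrightarrow> vmap E1 j b = vmap E2 j b) \<and> lab E1 j b = lab E2 j b"
  shows "E1 = E2"
proof -
  have below: "len E1 m = len E2 m \<and> vmap E1 m = vmap E2 m \<and> lab E1 m = lab E2 m" if "m < j" for m
  proof -
    have "len (dsrc E1) m = len (dsrc E2) m \<and> (\<forall>i. vmap (dsrc E1) m i = vmap (dsrc E2) m i)
        \<and> (\<forall>i. lab (dsrc E1) m i = lab (dsrc E2) m i)"
      using src_eq that by simp
    then show ?thesis using that dim by (simp add: fun_eq_iff)
  qed
  have len_eq: "len E1 m = len E2 m" for m
    using below[of m] len_top canonicalD(2)[OF can(1), of m] canonicalD(2)[OF can(2), of m] dim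
    by (cases m j rule: linorder_cases) auto
  show ?thesis
  proof (rule ldiag.equality)
    show "len E1 = len E2" using len_eq by blast
    show "vmap E1 = vmap E2"
    proof (intro ext)
      fix m b
      show "vmap E1 m b = vmap E2 m b"
        using below[of m] top[of b] len_eq[of m] dim
          canonicalD(3)[OF can(1), of m b] canonicalD(3)[OF can(2), of m b]
        by (cases m j rule: linorder_cases; cases "1 \<le> b \<and> b \<le> len E1 j") auto
    qed
    show "lab E1 = lab E2"
    proof (intro ext)
      fix m b
      show "lab E1 m b = lab E2 m b"
        using below[of m] top[of b] len_eq[of m] dim
          canonicalD(4)[OF can(1), of m b] canonicalD(4)[OF can(2), of m b]
        by (cases m j rule: linorder_cases; cases "1 \<le> b \<and> b \<le> len E1 j") auto
    qed
  qed (use dim in simp_all)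
qed

lemma TD_label_lwf:
  assumes "lwf (TD X) k Y" "m \<le> k" "1 \<le> a" "a \<le> len Y m"
  shows "lwf X m (lab Y m a)"
  using labelling_ok_cells[OF lwfD(4)[OF assms(1)], of m a] assms lwfD(1)[OF assms(1)] by simp

lemma TD_label_dsrc:
  assumes "lwf (TD X) k Y" "1 \<le> m" "m \<le> k" "1 \<le> a" "a \<le> len Y m"
  shows "dsrc (lab Y m a) =
    (let P = {b\<in>{1..<a}. vmap Y m b = vmap Y m a} in
      if P = {} then lab Y (m - 1) (vmap Y m a) else dtgt X (lab Y m (Max P)))"
proof -
  define P where "P = {b\<in>{1..<a}. vmap Y m b = vmap Y m a}"
  have "src (TD X) m (lab Y m a) =
      (if P = {} then lab Y (m - 1) (vmap Y m a) else tgt (TD X) m (lab Y m (Max P)))"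
    by (rule labelling_ok_src[OF lwfD(4)[OF assms(1)] _ _ _ _ P_def])
      (use assms lwfD(1)[OF assms(1)] in auto)
  then show ?thesis unfolding P_def Let_def by (simp only: TD_simps)
qed

context
  fixes X :: "'b gset" and k :: nat and Y1 Y2 :: "'b ldiag ldiag"
  assumes w1: "lwf (TD X) k Y1" and w2: "lwf (TD X) k Y2"
    and len_eq: "len Y1 = len Y2" and vmap_eq: "vmap Y1 = vmap Y2"
    and top: "\<And>m a. m \<le> k \<Longrightarrow> 1 \<le> a \<Longrightarrow> a \<le> len Y1 m \<Longrightarrow>
      len (lab Y1 m a) m = len (lab Y2 m a) m \<and>
      (\<forall>b\<in>{1..len (lab Y1 m a) m}. (0 < m \<longrightarrow> vmap (lab Y1 m a) m b = vmap (lab Y2 m a) m b)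
          \<and> lab (lab Y1 m a) m b = lab (lab Y2 m a) m b)"
begin

lemma TD_labelled_dsrc_eq:
  assumes a: "0 < m" "m \<le> k" "1 \<le> a" "a \<le> len Y1 m"
    and below: "\<And>b. 1 \<le> b \<Longrightarrow> b \<le> len Y1 (m - 1) \<Longrightarrow> lab Y1 (m - 1) b = lab Y2 (m - 1) b"
    and before: "\<And>b. 1 \<le> b \<Longrightarrow> b < a \<Longrightarrow> lab Y1 m b = lab Y2 m b"
  shows "dsrc (lab Y1 m a) = dsrc (lab Y2 m a)"
proof -
  let ?P = "{b\<in>{1..<a}. vmap Y1 m b = vmap Y1 m a}"
  have m: "1 \<le> m" and a2: "a \<le> len Y2 m" using a len_eq by auto
  have src1: "dsrc (lab Y1 m a) =
      (if ?P = {} then lab Y1 (m - 1) (vmap Y1 m a) else dtgt X (lab Y1 m (Max ?P)))"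
    using TD_label_dsrc[OF w1 m a(2-4)] by (simp only: Let_def)
  have src2: "dsrc (lab Y2 m a) =
      (if ?P = {} then lab Y2 (m - 1) (vmap Y1 m a) else dtgt X (lab Y2 m (Max ?P)))"
    using TD_label_dsrc[OF w2 m a(2,3) a2] by (simp only: Let_def vmap_eq)
  show ?thesis
  proof (cases "?P = {}")
    case True
    have "1 \<le> vmap Y1 m a" "vmap Y1 m a \<le> len Y1 (m - 1)"
      using diag_ok_vmap_range[OF lwfD(3)[OF w1], of m a] a lwfD(1)[OF w1] by auto
    then show ?thesis unfolding src1 src2 if_P[OF True] by (rule below)
  next
    case False
    then have "Max ?P \<in> ?P" by (intro Max_in) auto
    then show ?thesis unfolding src1 src2 if_not_P[OF False] using before by auto
  qed
qed

text \<open>The lower data of a label are forced by the source conditions, so the labels are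
  determined by their top-dimensional data.\<close>
lemma TD_labelled_lab_eq: "m \<le> k \<Longrightarrow> 1 \<le> a \<Longrightarrow> a \<le> len Y1 m \<Longrightarrow> lab Y1 m a = lab Y2 m a"
proof (induction m arbitrary: a rule: less_induct)
  case (less m)
  note below = less.IH
  show ?case
    using less.prems
  proof (induction a rule: less_induct)
    case (less a)
    have lwf1: "lwf X m (lab Y1 m a)" and lwf2: "lwf X m (lab Y2 m a)"
      using TD_label_lwf[OF w1] TD_label_lwf[OF w2] less.prems len_eq by auto
    have "0 < m \<Longrightarrow> dsrc (lab Y1 m a) = dsrc (lab Y2 m a)"
      using TD_labelled_dsrc_eq[of m a] below[of "m - 1"] less by auto
    then show ?case
      using canonical_eq_by_dsrc[OF lwfD(2)[OF lwf1] lwfD(2)[OF lwf2]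
          lwfD(1)[OF lwf1] lwfD(1)[OF lwf2]] top[of m a] less.prems
      by auto
  qed
qed

lemma TD_labelled_eqI: "Y1 = Y2"
proof (rule ldiag.equality)
  show "lab Y1 = lab Y2"
  proof (intro ext)
    fix m a
    show "lab Y1 m a = lab Y2 m a"
      using TD_labelled_lab_eq[of m a] canonicalD(4)[OF lwfD(2)[OF w1], of m a]
        canonicalD(4)[OF lwfD(2)[OF w2], of m a] lwfD(1)[OF w1] lwfD(1)[OF w2] len_eq
      by (cases "m \<le> k \<and> 1 \<le> a \<and> a \<le> len Y1 m") auto
  qed
qed (use len_eq vmap_eq lwfD(1)[OF w1] lwfD(1)[OF w2] in simp_all)

end

section \<open>Composites of block-shaped diagrams\<close>

lemma mu_simps [simp]:
  "dim (mu E) = dim E"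
  "len (mu E) m = (if m \<le> dim E then off E m (Suc (len E m)) else 0)"
  by (simp_all add: mu_def)

lemma off_Suc_0 [simp]: "off E m (Suc 0) = 0"
  by (simp add: off_def)

lemma off_2: "off E m 2 = len (lab E m 1) m"
  by (simp add: off_def numeral_2_eq_2)

lemma len_mu_unit_level: "m \<le> dim E \<Longrightarrow> len E m = 1 \<Longrightarrow> len (mu E) m = len (lab E m 1) m"
  using off_2[of E m] by (simp add: numeral_2_eq_2)

lemma mu_eqI:
  assumes dim: "dim E = dim D" and can: "canonical D"
    and len: "\<And>m. m \<le> dim D \<Longrightarrow> len (mu E) m = len D m"
    and vmap: "\<And>m g. 1 \<le> m \<Longrightarrow> m \<le> dim D \<Longrightarrow> 1 \<le> g \<Longrightarrow> g \<le> len D m \<Longrightarrow>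
      vmap (mu E) m g = vmap D m g"
    and lab: "\<And>m g. m \<le> dim D \<Longrightarrow> 1 \<le> g \<Longrightarrow> g \<le> len D m \<Longrightarrow> lab (mu E) m g = lab D m g"
  shows "mu E = D"
proof (rule ldiag.equality)
  have len_off: "m \<le> dim D \<Longrightarrow> off E m (Suc (len E m)) = len D m" for m
    using len[of m] dim by simp
  show "len (mu E) = len D"
    using len canonicalD(2)[OF can] dim by (auto simp: fun_eq_iff not_le)
  show "vmap (mu E) = vmap D"
  proof (intro ext)
    fix m g
    show "vmap (mu E) m g = vmap D m g"
      using vmap[of m g] canonicalD(3)[OF can, of m g] len_off[of m] dim
      by (cases "1 \<le> m \<and> m \<le> dim D \<and> 1 \<le> g \<and> g \<le> len D m") (auto simp: mu_def)
  qed
  show "lab (mu E) = lab D"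
  proof (intro ext)
    fix m g
    show "lab (mu E) m g = lab D m g"
      using lab[of m g] canonicalD(4)[OF can, of m g] len_off[of m] dim
      by (cases "m \<le> dim D \<and> 1 \<le> g \<and> g \<le> len D m") (auto simp: mu_def)
  qed
qed (use dim in \<open>simp_all add: mu_def\<close>)

definition block_shaped :: "nat \<Rightarrow> 'b ldiag ldiag \<Rightarrow> bool" where
  "block_shaped M y \<longleftrightarrow> diag_ok y \<and> (\<forall>m\<le>dim y. m \<noteq> M \<longrightarrow> len y m = 1) \<and>
     (\<forall>a\<in>{1..len y M}. len (lab y M a) M = 1)"

context
  fixes M :: nat and y :: "'b ldiag ldiag"
  assumes shaped: "block_shaped M y"
begin

lemma block_shaped_len: "m \<le> dim y \<Longrightarrow> m \<noteq> M \<Longrightarrow> len y m = 1"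
  and block_shaped_label_len: "1 \<le> a \<Longrightarrow> a \<le> len y M \<Longrightarrow> len (lab y M a) M = 1"
  using shaped unfolding block_shaped_def by auto

lemma block_shaped_vmap:
  assumes "1 \<le> m" "m \<le> dim y" "1 \<le> a" "a \<le> len y m"
  shows "m \<noteq> Suc M \<Longrightarrow> vmap y m a = 1"
    and "1 \<le> vmap y m a" "vmap y m a \<le> len y (m - 1)"
proof -
  show "1 \<le> vmap y m a" "vmap y m a \<le> len y (m - 1)"
    using diag_ok_vmap_range[of y m a] shaped assms unfolding block_shaped_def by auto
  then show "m \<noteq> Suc M \<Longrightarrow> vmap y m a = 1"
    using block_shaped_len[of "m - 1"] assms by simp
qed

lemma off_block_level: "c \<le> Suc (len y M) \<Longrightarrow> off y M c = c - 1"
proof -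
  assume "c \<le> Suc (len y M)"
  then have "off y M c = (\<Sum>i\<in>{1..<c}. 1)"
    unfolding off_def by (intro sum.cong) (auto simp: block_shaped_label_len)
  then show ?thesis by simp
qed

lemma len_mu_block:
  "m \<le> dim y \<Longrightarrow> len (mu y) m = (if m = M then len y M else len (lab y m 1) m)"
  using off_block_level[of "Suc (len y M)"] block_shaped_len[of m] off_2[of y m]
  by (simp add: numeral_2_eq_2)

lemma comp_inner_block_level:
  assumes "1 \<le> g" "g \<le> len y M"
  shows "comp y M g = g" "inner y M g = 1"
proof -
  show comp: "comp y M g = g"
    unfolding comp_def
  proof (rule Least_equality)
    show "g \<le> off y M (Suc g)" using off_block_level[of "Suc g"] assms by simp
    fix i assume "g \<le> off y M (Suc i)"
    then show "g \<le> i" using off_block_level[of "Suc i"] assms by (cases "i \<le> len y M") auto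
  qed
  show "inner y M g = 1"
    unfolding inner_def comp using off_block_level[of g] assms by simp
qed

lemma comp_inner_block_other:
  assumes "m \<le> dim y" "m \<noteq> M" "1 \<le> g" "g \<le> len (lab y m 1) m"
  shows "comp y m g = 1" "inner y m g = g"
proof -
  show comp: "comp y m g = 1"
    unfolding comp_def
  proof (rule Least_equality)
    show "g \<le> off y m (Suc 1)" using off_2[of y m] assms by (simp add: numeral_2_eq_2)
    fix i assume "g \<le> off y m (Suc i)"
    then show "1 \<le> i" using assms by (cases i) auto
  qed
  show "inner y m g = g"
    unfolding inner_def comp by simp
qed

lemma mu_block_level:
  assumes "M \<le> dim y" "1 \<le> g" "g \<le> len y M"
  shows "1 \<le> M \<Longrightarrow> vmap (mu y) M g = vmap (lab y M g) M 1"
    and "lab (mu y) M g = lab (lab y M g) M 1"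
proof -
  have range: "g \<le> off y M (Suc (len y M))"
    using off_block_level[of "Suc (len y M)"] assms by simp
  show "lab (mu y) M g = lab (lab y M g) M 1"
    using range assms by (simp add: mu_def comp_inner_block_level)
  assume "1 \<le> M"
  then have "vmap y M g = 1"
    using block_shaped_vmap(1)[of M g] assms by simp
  then show "vmap (mu y) M g = vmap (lab y M g) M 1"
    using range assms \<open>1 \<le> M\<close> by (simp add: mu_def comp_inner_block_level)
qed

lemma mu_block_other:
  assumes "m \<le> dim y" "m \<noteq> M" "1 \<le> g" "g \<le> len (lab y m 1) m"
  shows "1 \<le> m \<Longrightarrow> vmap (mu y) m g =
      (if m = Suc M then vmap y m 1 - 1 else 0) + vmap (lab y m 1) m g"
    and "lab (mu y) m g = lab (lab y m 1) m g"
proof -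
  have range: "g \<le> off y m (Suc (len y m))"
    using len_mu_block[of m] assms by simp
  show "lab (mu y) m g = lab (lab y m 1) m g"
    using range assms by (simp add: mu_def comp_inner_block_other)
  assume "1 \<le> m"
  have "off y (m - 1) (vmap y m 1) = (if m = Suc M then vmap y m 1 - 1 else 0)"
  proof (cases "m = Suc M")
    case True
    then show ?thesis
      using block_shaped_vmap(3)[of m 1] block_shaped_len[of m] off_block_level assms \<open>1 \<le> m\<close>
      by simp
  next
    case False
    then show ?thesis
      using block_shaped_vmap(1)[of m 1] block_shaped_len[of m] assms \<open>1 \<le> m\<close> by simp
  qed
  then show "vmap (mu y) m g = (if m = Suc M then vmap y m 1 - 1 else 0) + vmap (lab y m 1) m g"
    using range assms \<open>1 \<le> m\<close> by (simp add: mu_def comp_inner_block_other)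
qed

end

lemma block_shaped_mu_inj:
  assumes w1: "lwf (TD X) k y1" and w2: "lwf (TD X) k y2"
    and s1: "block_shaped M y1" and s2: "block_shaped M y2"
    and len_eq: "len y1 = len y2" and vmap_eq: "vmap y1 = vmap y2" and mu_eq: "mu y1 = mu y2"
  shows "y1 = y2"
proof (rule TD_labelled_eqI[OF w1 w2 len_eq vmap_eq])
  fix m a assume m: "m \<le> k" and a: "1 \<le> a" "a \<le> len y1 m"
  have dims: "dim y1 = k" "dim y2 = k" using lwfD(1) w1 w2 by auto
  show "len (lab y1 m a) m = len (lab y2 m a) m \<and>
      (\<forall>b\<in>{1..len (lab y1 m a) m}. (0 < m \<longrightarrow> vmap (lab y1 m a) m b = vmap (lab y2 m a) m b)
          \<and> lab (lab y1 m a) m b = lab (lab y2 m a) m b)"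
  proof (cases "m = M")
    case True
    then show ?thesis
      using block_shaped_label_len[OF s1, of a] block_shaped_label_len[OF s2, of a]
        mu_block_level[OF s1, of a] mu_block_level[OF s2, of a] mu_eq len_eq m a dims by auto
  next
    case False
    have "a = 1" using block_shaped_len[OF s1, of m] m a False dims by simp
    moreover have len_eq': "len (lab y1 m 1) m = len (lab y2 m 1) m"
      using len_mu_block[OF s1, of m] len_mu_block[OF s2, of m] mu_eq m False dims by simp
    moreover have "vmap (lab y1 m 1) m b = vmap (lab y2 m 1) m b"
      if "0 < m" "1 \<le> b" "b \<le> len (lab y1 m 1) m" for b
      using mu_block_other(1)[OF s1, of m b] mu_block_other(1)[OF s2, of m b]
        that len_eq' mu_eq vmap_eq m False dims by (cases "m = Suc M") simp_all
    moreover have "lab (lab y1 m 1) m b = lab (lab y2 m 1) m b"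
      if "1 \<le> b" "b \<le> len (lab y1 m 1) m" for b
      using mu_block_other(2)[OF s1, of m b] mu_block_other(2)[OF s2, of m b]
        that len_eq' mu_eq m False dims by simp
    ultimately show ?thesis by auto
  qed
qed

section \<open>Factorising a diagram that is not a block\<close>

locale nonblock_diagram =
  fixes X :: "'a gset" and n k :: nat and D :: "'a ldiag"
  assumes globular: "globular n X" and k_le_n: "k \<le> n" and D_lwf: "lwf X k D"
    and D_nontrivial: "nontrivial D" and D_not_block: "\<not> is_block D"
begin

definition M :: nat where "M = Mlev D"
definition L :: nat where "L = len D M"
definition p :: nat where "p = vmap D (Suc M) 1"

lemma D_dim: "dim D = k" and D_canonical: "canonical D" and D_diag_ok: "diag_ok D"
  and D_labelling_ok: "labelling_ok X D"
  using lwfD[OF D_lwf] by auto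

lemma len_D_pos: "1 \<le> j \<Longrightarrow> j \<le> k \<Longrightarrow> 1 \<le> len D j"
  using D_nontrivial D_dim unfolding nontrivial_def nondegenerate_def by force

lemma D_levels: "finite {j. 1 < len D j}" "{j. 1 < len D j} \<noteq> {}" "{j. 1 < len D j} \<subseteq> {1..k}"
proof -
  show sub: "{j. 1 < len D j} \<subseteq> {1..k}"
  proof
    fix j assume "j \<in> {j. 1 < len D j}"
    then have "j \<noteq> 0" "\<not> k < j" using canonicalD(1,2)[OF D_canonical] D_dim by (auto intro: gr0I)
    then show "j \<in> {1..k}" by simp
  qed
  then show "finite {j. 1 < len D j}" by (rule finite_subset) simp
  show "{j. 1 < len D j} \<noteq> {}" using D_nontrivial unfolding nontrivial_def by auto
qed

lemma L_gt_1: "1 < L" and M_le_k: "M \<le> k"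
  using Max_in[OF D_levels(1,2)] D_levels(3) unfolding L_def M_def Mlev_def by auto

lemma len_D_above_M: "M < j \<Longrightarrow> j \<le> k \<Longrightarrow> len D j = 1"
  using Max_ge[OF D_levels(1), of j] len_D_pos[of j] unfolding M_def Mlev_def by fastforce

lemma mlev_D: "1 < len D (mlev D)" "1 \<le> mlev D" "mlev D < M"
proof -
  show "1 < len D (mlev D)" "1 \<le> mlev D"
    using Min_in[OF D_levels(1,2)] D_levels(3) unfolding mlev_def by auto
  have "mlev D \<noteq> M" using D_not_block D_nontrivial unfolding is_block_def M_def by simp
  moreover have "mlev D \<le> M"
    using Min_le[OF D_levels(1)] Max_in[OF D_levels(1,2)] unfolding mlev_def M_def Mlev_def by blast
  ultimately show "mlev D < M" by simp
qed

lemma M_ge_2: "2 \<le> M"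
  using mlev_D by simp

lemma M_pred_simps [simp]:
  "M - Suc 0 \<noteq> M" "M \<noteq> M - Suc 0" "M - Suc 0 \<noteq> Suc M" "Suc M \<noteq> M - Suc 0"
  "M - Suc 0 < M" "Suc (M - Suc 0) = M" "M \<noteq> 0"
  using M_ge_2 by auto

lemma vmap_D_M_range: "1 \<le> i \<Longrightarrow> i \<le> L \<Longrightarrow> 1 \<le> vmap D M i \<and> vmap D M i \<le> len D (M - 1)"
  using diag_ok_vmap_range[OF D_diag_ok, of M i] M_ge_2 M_le_k D_dim unfolding L_def by auto

lemma p_range: "M < k \<Longrightarrow> 1 \<le> p \<and> p \<le> L"
  using diag_ok_vmap_range[OF D_diag_ok, of "Suc M" 1] len_D_above_M[of "Suc M"] D_dim
  unfolding p_def L_def by auto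

lemma D_cells: "m \<le> k \<Longrightarrow> 1 \<le> i \<Longrightarrow> i \<le> len D m \<Longrightarrow> lab D m i \<in> cells X m"
  using labelling_ok_cells[OF D_labelling_ok] D_dim by auto

lemma tgt_M_cell:
  assumes "x \<in> cells X M"
  shows "tgt X M x \<in> cells X (M - 1)"
    and "src X (M - 1) (tgt X M x) = src X (M - 1) (src X M x)"
    and "tgt X (M - 1) (tgt X M x) = tgt X (M - 1) (src X M x)"
proof -
  have "M \<in> {1..n}" "M \<in> {2..n}" using M_ge_2 M_le_k k_le_n by auto
  then show "tgt X M x \<in> cells X (M - 1)"
    and "src X (M - 1) (tgt X M x) = src X (M - 1) (src X M x)"
    and "tgt X (M - 1) (tgt X M x) = tgt X (M - 1) (src X M x)"
    using globular assms unfolding globular_def by metis+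
qed

text \<open>The label that the \<open>(M - 1)\<close>-cell \<open>q\<close> carries just before the \<open>i\<close>-th cell of
  level \<open>M\<close> is attached: the target of the last earlier \<open>M\<close>-cell attached to \<open>q\<close>, if any.\<close>
definition mid_lab :: "nat \<Rightarrow> nat \<Rightarrow> 'a" where
  "mid_lab i q = (if \<exists>j\<in>{1..<i}. vmap D M j = q
     then tgt X M (lab D M (Max {j\<in>{1..<i}. vmap D M j = q})) else lab D (M - 1) q)"

lemma mid_lab_start: "i \<le> 1 \<Longrightarrow> mid_lab i q = lab D (M - 1) q"
  unfolding mid_lab_def by auto

lemma mid_lab_Suc:
  assumes "1 \<le> i"
  shows "mid_lab (Suc i) q = (if vmap D M i = q then tgt X M (lab D M i) else mid_lab i q)"
proof (cases "vmap D M i = q")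
  case True
  have "Max {j\<in>{1..<Suc i}. vmap D M j = q} = i"
    by (rule Max_eqI) (use True assms in auto)
  then show ?thesis unfolding mid_lab_def using True assms by auto
next
  case False
  then have "{j\<in>{1..<Suc i}. vmap D M j = q} = {j\<in>{1..<i}. vmap D M j = q}"
    by (auto simp: less_Suc_eq)
  then show ?thesis unfolding mid_lab_def using False by (auto simp: less_Suc_eq)
qed

lemma src_lab_D_M:
  assumes "1 \<le> i" "i \<le> L"
  shows "src X M (lab D M i) = mid_lab i (vmap D M i)"
proof -
  define P where "P = {j\<in>{1..<i}. vmap D M j = vmap D M i}"
  have "src X M (lab D M i) =
      (if P = {} then lab D (M - 1) (vmap D M i) else tgt X M (lab D M (Max P)))"
    by (rule labelling_ok_src[OF D_labelling_ok _ _ _ _ P_def])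
      (use assms M_ge_2 M_le_k D_dim in \<open>auto simp: L_def\<close>)
  then show ?thesis unfolding mid_lab_def P_def by auto
qed

lemma mid_lab_cell:
  assumes "i \<le> Suc L" "1 \<le> q" "q \<le> len D (M - 1)"
  shows "mid_lab i q \<in> cells X (M - 1) \<and>
    src X (M - 1) (mid_lab i q) = src X (M - 1) (lab D (M - 1) q) \<and>
    tgt X (M - 1) (mid_lab i q) = tgt X (M - 1) (lab D (M - 1) q)"
  using assms(1)
proof (induction i)
  case 0
  then show ?case using mid_lab_start D_cells[of "M - 1" q] assms M_le_k by simp
next
  case (Suc i)
  show ?case
  proof (cases "i = 0")
    case True
    then show ?thesis using mid_lab_start D_cells[of "M - 1" q] assms M_le_k by simp
  next
    case False
    then have i: "1 \<le> i" "i \<le> L" using Suc.prems by auto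
    show ?thesis
    proof (cases "vmap D M i = q")
      case True
      have "lab D M i \<in> cells X M" using D_cells[of M i] i M_le_k by (simp add: L_def)
      then show ?thesis
        using tgt_M_cell[of "lab D M i"] src_lab_D_M[OF i] mid_lab_Suc[OF i(1)] True Suc i by simp
    next
      case False
      then show ?thesis using mid_lab_Suc[OF i(1)] Suc i by simp
    qed
  qed
qed

lemma mid_lab_outside:
  assumes "i \<le> Suc L" "\<not> (1 \<le> q \<and> q \<le> len D (M - 1))"
  shows "mid_lab i q = lab D (M - 1) q"
  using vmap_D_M_range assms unfolding mid_lab_def by force

text \<open>The \<open>i\<close>-th factor \<open>D\<^sub>i\<close> of \<open>D\<close>, truncated or extended to dimension \<open>j\<close>: level \<open>M\<close>
  is cut down to the \<open>i\<close>-th cell, level \<open>M - 1\<close> carries the labels seen by that cell, and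
  the cells above \<open>M\<close> (meaningful only for \<open>i = p\<close>) are attached to it.\<close>
definition factor :: "nat \<Rightarrow> nat \<Rightarrow> 'a ldiag" where
  "factor i j = \<lparr>dim = j,
     len = \<lambda>m. if m \<le> j then (if m = M then 1 else len D m) else 0,
     vmap = \<lambda>m a. if m \<le> j then (if m = M then (if a = 1 then vmap D M i else 0)
       else if m = Suc M then (if a = 1 then 1 else 0) else vmap D m a) else 0,
     lab = \<lambda>m a. if m \<le> j then (if m = M - 1 then mid_lab i a
       else if m = M then (if a = 1 then lab D M i else undefined) else lab D m a) else undefined\<rparr>"

lemma factor_simps [simp]:
  "dim (factor i j) = j"
  "len (factor i j) m = (if m \<le> j then (if m = M then 1 else len D m) else 0)"
  "vmap (factor i j) m a = (if m \<le> j then (if m = M then (if a = 1 then vmap D M i else 0)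
     else if m = Suc M then (if a = 1 then 1 else 0) else vmap D m a) else 0)"
  "lab (factor i j) m a = (if m \<le> j then (if m = M - 1 then mid_lab i a
     else if m = M then (if a = 1 then lab D M i else undefined) else lab D m a) else undefined)"
  by (simp_all add: factor_def)

lemma dsrc_factor: "1 \<le> j \<Longrightarrow> dsrc (factor i j) = factor i (j - 1)"
  by (rule ldiag.equality) (auto simp: fun_eq_iff)

lemma dtgt_factor:
  assumes "1 \<le> i"
  shows "dtgt X (factor i M) = factor (Suc i) (M - 1)"
proof (rule ldiag.equality)
  have image: "vmap (factor i M) M ` {1..len (factor i M) M} = {vmap D M i}" by simp
  have last: "Max {b\<in>{1..len (factor i M) M}. vmap (factor i M) M b = vmap D M i} = 1"
    by (rule Max_eqI) auto
  show "lab (dtgt X (factor i M)) = lab (factor (Suc i) (M - 1))"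
  proof (intro ext)
    fix m q
    show "lab (dtgt X (factor i M)) m q = lab (factor (Suc i) (M - 1)) m q"
    proof (cases "m = M - 1")
      case True
      then have "lab (dtgt X (factor i M)) m q =
          (if q = vmap D M i then tgt X M (lab D M i) else mid_lab i q)"
        using image last unfolding dtgt_def by simp
      then show ?thesis using True mid_lab_Suc[OF assms, of q] by auto
    qed (use M_ge_2 in \<open>auto simp: dtgt_def\<close>)
  qed
qed (use M_ge_2 in \<open>auto simp: dtgt_def fun_eq_iff\<close>)

lemma factor_canonical:
  assumes "i \<le> Suc L" "j \<le> k"
  shows "canonical (factor i j)"
  unfolding canonical_def
proof (intro conjI allI impI)
  fix m a
  assume "\<not> (1 \<le> m \<and> m \<le> dim (factor i j) \<and> 1 \<le> a \<and> a \<le> len (factor i j) m)"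
  then show "vmap (factor i j) m a = 0"
    using canonicalD(3)[OF D_canonical, of m a] D_dim len_D_above_M[of m] M_ge_2 assms by auto
next
  fix m a
  assume "\<not> (m \<le> dim (factor i j) \<and> 1 \<le> a \<and> a \<le> len (factor i j) m)"
  then show "lab (factor i j) m a = undefined"
    using canonicalD(4)[OF D_canonical, of m a] mid_lab_outside[OF assms(1), of a] D_dim assms
    by (cases "m = M - 1") auto
qed (use canonicalD(1)[OF D_canonical] in auto)

lemma factor_diag_ok:
  assumes "1 \<le> i" "i \<le> L" "j \<le> k"
  shows "diag_ok (factor i j)"
  unfolding diag_ok_def
proof (intro conjI ballI)
  show "canonical (factor i j)" using factor_canonical assms by simp
  fix m a assume m: "m \<in> {1..dim (factor i j)}" and a: "a \<in> {1..len (factor i j) m}"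
  have "m \<noteq> M \<Longrightarrow> m \<noteq> Suc M \<Longrightarrow> vmap D m a \<in> {1..len D (m - 1)}"
    using diag_ok_vmap_range[OF D_diag_ok, of m a] m a assms D_dim by auto
  then show "vmap (factor i j) m a \<in> {1..len (factor i j) (m - 1)}"
    using m a vmap_D_M_range[of i] assms len_D_above_M[of m] by auto
qed

lemma src_mid_lab:
  assumes "i \<le> Suc L" "1 \<le> a" "a \<le> len D (M - 1)"
    and P: "P = {b\<in>{1..<a}. vmap D (M - 1) b = vmap D (M - 1) a}"
  shows "src X (M - 1) (mid_lab i a) =
    (if P = {} then lab D (M - 2) (vmap D (M - 1) a) else tgt X (M - 1) (mid_lab i (Max P)))"
proof -
  have "src X (M - 1) (lab D (M - 1) a) =
      (if P = {} then lab D (M - 1 - 1) (vmap D (M - 1) a)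
       else tgt X (M - 1) (lab D (M - 1) (Max P)))"
    by (rule labelling_ok_src[OF D_labelling_ok _ _ _ _ P]) (use assms M_ge_2 M_le_k D_dim in auto)
  moreover have "P \<noteq> {} \<Longrightarrow> 1 \<le> Max P \<and> Max P \<le> len D (M - 1)"
    using Max_in[of P] assms unfolding P by auto
  ultimately show ?thesis
    using mid_lab_cell[of i] assms by (auto simp: numeral_2_eq_2)
qed

lemma factor_labelling_ok:
  assumes i: "1 \<le> i" "i \<le> L" and j: "j \<le> k" "j \<le> M \<or> i = p"
  shows "labelling_ok X (factor i j)"
proof (rule labelling_okI)
  fix m a assume "m \<le> dim (factor i j)" "1 \<le> a" "a \<le> len (factor i j) m"
  then show "lab (factor i j) m a \<in> cells X m"
    using mid_lab_cell[of i a] D_cells[of m a] D_cells[of M i] i j M_le_k by (auto simp: L_def)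
next
  fix m a P assume m: "1 \<le> m" "m \<le> dim (factor i j)" and a: "1 \<le> a" "a \<le> len (factor i j) m"
    and P: "P = {b\<in>{1..<a}. vmap (factor i j) m b = vmap (factor i j) m a}"
  define PD where "PD = {b\<in>{1..<a}. vmap D m b = vmap D m a}"
  have D_src: "src X m (lab D m a) =
      (if PD = {} then lab D (m - 1) (vmap D m a) else tgt X m (lab D m (Max PD)))"
    if "a \<le> len D m"
    by (rule labelling_ok_src[OF D_labelling_ok _ _ _ _ PD_def]) (use m a(1) that j D_dim in auto)
  consider "m = M" | "m = Suc M" | "m = M - 1" | "m \<noteq> M" "m \<noteq> Suc M" "m \<noteq> M - 1"
    by blast
  then show "src X m (lab (factor i j) m a) =
      (if P = {} then lab (factor i j) (m - 1) (vmap (factor i j) m a)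
       else tgt X m (lab (factor i j) m (Max P)))"
  proof cases
    case 1
    then show ?thesis using m a P src_lab_D_M[OF i] by auto
  next
    case 2
    then have "a = 1" "i = p" "P = {}" "PD = {}"
      using m a P PD_def j len_D_above_M[of m] by auto
    then show ?thesis using D_src 2 m j len_D_above_M[of m] by (simp add: p_def)
  next
    case 3
    then show ?thesis
      using src_mid_lab[of i a P] m a i P by (auto simp: numeral_2_eq_2)
  next
    case 4
    then have "P = PD" using P PD_def m by auto
    then show ?thesis using D_src 4 m a by auto
  qed
qed

lemma factor_lwf: "1 \<le> i \<Longrightarrow> i \<le> L \<Longrightarrow> j \<le> k \<Longrightarrow> j \<le> M \<or> i = p \<Longrightarrow> lwf X j (factor i j)"
  unfolding lwf_def using factor_diag_ok factor_labelling_ok by simp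

lemma factor_nontrivial:
  assumes "M \<le> j" "j \<le> k"
  shows "nontrivial (factor i j)" "Mlev (factor i j) < M"
proof -
  have levels: "{m. 1 < len (factor i j) m} \<subseteq> {..<M}"
  proof
    fix m assume "m \<in> {m. 1 < len (factor i j) m}"
    then have "m \<noteq> M" "m \<le> j" "1 < len D m" by (auto split: if_splits)
    then show "m \<in> {..<M}" using len_D_above_M[of m] assms by fastforce
  qed
  have mlev: "mlev D \<in> {m. 1 < len (factor i j) m}"
    using mlev_D assms by auto
  show "Mlev (factor i j) < M"
    using Max_in[of "{m. 1 < len (factor i j) m}"] finite_subset[OF levels] levels mlev
    unfolding Mlev_def by blast
  show "nontrivial (factor i j)"
    unfolding nontrivial_def nondegenerate_def
  proof
    show "\<forall>m\<in>{1..dim (factor i j)}. 0 < len (factor i j) m"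
      using len_D_pos assms by fastforce
    show "\<exists>m\<in>{1..dim (factor i j)}. 1 < len (factor i j) m"
      using mlev mlev_D assms by (intro bexI[of _ "mlev D"]) auto
  qed
qed

definition decomp_len :: "nat \<Rightarrow> nat" where
  "decomp_len m = (if m \<le> k then if m = M then L else 1 else 0)"

definition factor_index :: "nat \<Rightarrow> nat \<Rightarrow> nat" where
  "factor_index m a = (if m = M then a else if M < m then p else 1)"

text \<open>The block \<open>B\<^sup>k(M, L, p)\<close> (or \<open>B\<^sup>k(k, L)\<close> if \<open>M = k\<close>) labelled by the factors of \<open>D\<close>.\<close>
definition decomp :: "'a ldiag ldiag" where
  "decomp = \<lparr>dim = k, len = decomp_len,
     vmap = \<lambda>m a. if 1 \<le> m \<and> m \<le> k \<and> 1 \<le> a \<and> a \<le> decomp_len m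
       then (if m = Suc M then p else 1) else 0,
     lab = \<lambda>m a. if m \<le> k \<and> 1 \<le> a \<and> a \<le> decomp_len m
       then factor (factor_index m a) m else undefined\<rparr>"

lemma decomp_simps [simp]:
  "dim decomp = k" "len decomp = decomp_len"
  "vmap decomp m a = (if 1 \<le> m \<and> m \<le> k \<and> 1 \<le> a \<and> a \<le> decomp_len m
     then (if m = Suc M then p else 1) else 0)"
  "lab decomp m a = (if m \<le> k \<and> 1 \<le> a \<and> a \<le> decomp_len m
     then factor (factor_index m a) m else undefined)"
  by (simp_all add: decomp_def)

lemma decomp_len_simps:
  "decomp_len M = L" "m \<le> k \<Longrightarrow> m \<noteq> M \<Longrightarrow> decomp_len m = 1" "k < m \<Longrightarrow> decomp_len m = 0"
  using L_gt_1 M_le_k by (auto simp: decomp_len_def)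

lemma factor_index_range:
  assumes "m \<le> k" "1 \<le> a" "a \<le> decomp_len m"
  shows "1 \<le> factor_index m a \<and> factor_index m a \<le> L \<and> (m \<le> M \<or> factor_index m a = p)"
  using assms p_range L_gt_1 M_le_k unfolding factor_index_def decomp_len_def
  by (auto split: if_splits)

lemma decomp_diag_ok: "diag_ok decomp"
  unfolding diag_ok_def canonical_def
  using L_gt_1 M_le_k p_range by (auto simp: decomp_len_def)

lemma decomp_labelling_ok: "labelling_ok (TD X) decomp"
proof (rule labelling_okI)
  fix m a assume "m \<le> dim decomp" "1 \<le> a" "a \<le> len decomp m"
  then show "lab decomp m a \<in> cells (TD X) m"
    using factor_index_range[of m a] factor_lwf by auto
next
  fix m a P assume m: "1 \<le> m" "m \<le> dim decomp" and a: "1 \<le> a" "a \<le> len decomp m"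
    and P: "P = {b\<in>{1..<a}. vmap decomp m b = vmap decomp m a}"
  have src: "src (TD X) m (lab decomp m a) = factor (factor_index m a) (m - 1)"
    using m a dsrc_factor by simp
  show "src (TD X) m (lab decomp m a) =
      (if P = {} then lab decomp (m - 1) (vmap decomp m a)
       else tgt (TD X) m (lab decomp m (Max P)))"
  proof (cases "m = M \<and> a \<noteq> 1")
    case True
    then have "P = {1..<a}" using P m a by (auto simp: decomp_len_def)
    moreover have "Max {1..<a} = a - 1" using True a by (intro Max_eqI) auto
    ultimately show ?thesis
      using src True m a dtgt_factor[of "a - 1"] by (auto simp: factor_index_def decomp_len_def)
  next
    case False
    then have "a = 1" using m a by (auto simp: decomp_len_def)
    then show ?thesis
      using src P m p_range L_gt_1 M_le_k by (auto simp: factor_index_def decomp_len_def)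
  qed
qed

lemma decomp_lwf: "lwf (TD X) k decomp"
  unfolding lwf_def using decomp_diag_ok decomp_labelling_ok by simp

lemma decomp_block_shaped: "block_shaped M decomp"
  unfolding block_shaped_def
  using decomp_diag_ok decomp_len_simps by (auto simp: factor_index_def)

lemma mu_decomp: "mu decomp = D"
proof (rule mu_eqI)
  show "dim decomp = dim D" "canonical D" using D_dim D_canonical by auto
  show "len (mu decomp) m = len D m" if "m \<le> dim D" for m
    using len_mu_block[OF decomp_block_shaped, of m] that D_dim decomp_len_simps
    by (auto simp: L_def factor_index_def)
  show "vmap (mu decomp) m g = vmap D m g"
    if "1 \<le> m" "m \<le> dim D" "1 \<le> g" "g \<le> len D m" for m g
  proof (cases "m = M")
    case True
    then show ?thesis
      using mu_block_level(1)[OF decomp_block_shaped, of g] that D_dim L_gt_1 M_le_k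
      by (simp add: decomp_len_simps L_def factor_index_def)
  next
    case False
    then show ?thesis
      using mu_block_other(1)[OF decomp_block_shaped, of m g] that D_dim decomp_len_simps(2)[of m]
        len_D_above_M[of m] p_range
      by (auto simp: factor_index_def p_def)
  qed
  show "lab (mu decomp) m g = lab D m g"
    if "m \<le> dim D" "1 \<le> g" "g \<le> len D m" for m g
  proof (cases "m = M")
    case True
    then show ?thesis
      using mu_block_level(2)[OF decomp_block_shaped, of g] that D_dim L_gt_1 M_le_k
      by (simp add: decomp_len_simps L_def factor_index_def)
  next
    case False
    then show ?thesis
      using mu_block_other(2)[OF decomp_block_shaped, of m g] that D_dim decomp_len_simps(2)[of m]
        mid_lab_start
      by (auto simp: factor_index_def)
  qed
qed

lemma decomp_levels: "{j. 1 < len decomp j} = {M}"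
proof -
  have "1 < decomp_len j \<longleftrightarrow> j = M" for j
    using L_gt_1 M_le_k by (auto simp: decomp_len_def)
  then show ?thesis by auto
qed

lemma Mlev_decomp: "Mlev decomp = M" and mlev_decomp: "mlev decomp = M"
  unfolding Mlev_def mlev_def decomp_levels by simp_all

lemma decomp_is_block: "is_block decomp"
  unfolding is_block_def nontrivial_def nondegenerate_def Mlev_decomp mlev_decomp
  using L_gt_1 M_le_k M_ge_2 by (auto simp: decomp_len_def intro!: bexI[of _ M])

lemma minlab_decomp:
  assumes "1 \<le> j" "j \<le> L"
  shows "minlab decomp j = (if M < k \<and> j = p then factor p k else factor j M)"
  using assms L_gt_1 M_le_k decomp_len_simps p_range
  unfolding minlab_def Mlev_decomp by (auto simp: factor_index_def)

definition decomposition :: "'a ldiag ldiag \<Rightarrow> bool" where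
  "decomposition y \<longleftrightarrow> y \<in> cells (TD (TD X)) k \<and> is_block y \<and> mu y = D \<and>
     (\<forall>j\<in>{1..len y (Mlev y)}. nontrivial (minlab y j) \<and> Mlev (minlab y j) < Mlev D) \<and>
     mlev y = Mlev D \<and> len y (Mlev y) = len D (Mlev D)"

lemma decomposition_decomp: "decomposition decomp"
proof -
  have "nontrivial (minlab decomp j) \<and> Mlev (minlab decomp j) < M" if "1 \<le> j" "j \<le> L" for j
    using minlab_decomp[OF that] factor_nontrivial L_gt_1 M_le_k by auto
  then show ?thesis
    unfolding decomposition_def M_def[symmetric] L_def[symmetric]
    using decomp_lwf decomp_is_block mu_decomp Mlev_decomp mlev_decomp decomp_len_simps(1) by auto
qed

context
  fixes y :: "'a ldiag ldiag"
  assumes decomposition: "decomposition y"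
begin

lemma decomposition_lwf: "lwf (TD X) k y"
  and decomposition_mu: "mu y = D"
  using decomposition unfolding decomposition_def by auto

lemma decomposition_levels: "1 < len y j \<longleftrightarrow> j = M"
proof -
  let ?S = "{j. 1 < len y j}"
  have "?S \<subseteq> {..k}"
  proof
    fix j assume "j \<in> ?S"
    then show "j \<in> {..k}"
      using canonicalD(2)[OF lwfD(2)[OF decomposition_lwf], of j] lwfD(1)[OF decomposition_lwf]
      by (cases "k < j") auto
  qed
  then have "finite ?S" by (rule finite_subset) simp
  moreover have "?S \<noteq> {}" "Min ?S = M" "Max ?S = M"
    using decomposition
    unfolding decomposition_def is_block_def nontrivial_def mlev_def Mlev_def M_def by auto
  ultimately show ?thesis
    using Min_le[of ?S j] Max_ge[of ?S j] Max_in[of ?S] by auto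
qed

lemma decomposition_Mlev: "Mlev y = M"
  and decomposition_len_M: "len y M = L"
proof -
  have "{j. 1 < len y j} = {M}" using decomposition_levels by auto
  then show "Mlev y = M" unfolding Mlev_def by simp
  then show "len y M = L"
    using decomposition unfolding decomposition_def M_def[symmetric] L_def[symmetric] by simp
qed

lemma decomposition_len: "len y = decomp_len"
proof
  fix m
  have can: "canonical y" and dim: "dim y = k" using lwfD decomposition_lwf by auto
  have "0 < len y m" if "1 \<le> m" "m \<le> k"
    using decomposition that dim
    unfolding decomposition_def is_block_def nontrivial_def nondegenerate_def by auto
  then show "len y m = decomp_len m"
    using decomposition_levels[of m] decomposition_len_M canonicalD(1)[OF can]
      canonicalD(2)[OF can, of m] dim L_gt_1 M_le_k
    unfolding decomp_len_def by (cases "m = 0") auto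
qed

lemma decomposition_dim: "dim y = k"
  using lwfD(1)[OF decomposition_lwf] .

lemma decomposition_label_Suc_M:
  assumes "M < k"
  shows "len (lab y (Suc M) 1) (Suc M) = 1"
    and "1 \<le> vmap (lab y (Suc M) 1) (Suc M) 1"
    and "vmap (lab y (Suc M) 1) (Suc M) 1 \<le> len (lab y M (vmap y (Suc M) 1)) M"
proof -
  let ?E = "lab y (Suc M) 1"
  have len1: "len y (Suc M) = 1"
    using assms decomposition_len decomp_len_simps(2)[of "Suc M"] by simp
  have E: "lwf X (Suc M) ?E"
    using TD_label_lwf[OF decomposition_lwf, of "Suc M" 1] assms len1 by simp
  show top: "len ?E (Suc M) = 1"
    using len_mu_unit_level[of "Suc M" y] decomposition_mu len_D_above_M[of "Suc M"] assms len1
      decomposition_dim by simp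
  have src: "dsrc ?E = lab y M (vmap y (Suc M) 1)"
    using TD_label_dsrc[OF decomposition_lwf, of "Suc M" 1] assms len1 by simp
  have "len ?E M = len (dsrc ?E) M" using lwfD(1)[OF E] by simp
  also have "\<dots> = len (lab y M (vmap y (Suc M) 1)) M" unfolding src ..
  finally show "1 \<le> vmap ?E (Suc M) 1" "vmap ?E (Suc M) 1 \<le> len (lab y M (vmap y (Suc M) 1)) M"
    using diag_ok_vmap_range[OF lwfD(3)[OF E], of "Suc M" 1] lwfD(1)[OF E] top by auto
qed

lemma decomposition_label_len_pos:
  assumes "1 \<le> a" "a \<le> L"
  shows "1 \<le> len (lab y M a) M"
proof (cases "M < k \<and> a = vmap y (Suc M) 1")
  case True
  then have "M < k" and a: "a = vmap y (Suc M) 1" by auto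
  show ?thesis
    unfolding a using decomposition_label_Suc_M(2,3)[OF \<open>M < k\<close>] by linarith
next
  case False
  then have "minlab y a = lab y M a"
    using decomposition_Mlev decomposition_dim unfolding minlab_def by auto
  moreover have "nontrivial (minlab y a)"
    using decomposition assms decomposition_Mlev decomposition_len_M
    unfolding decomposition_def by auto
  moreover have "dim (lab y M a) = M"
    using TD_label_lwf[OF decomposition_lwf, of M a] lwfD(1) assms M_le_k decomposition_len_M
    by auto
  ultimately have "\<forall>i\<in>{1..M}. 0 < len (lab y M a) i"
    unfolding nontrivial_def nondegenerate_def by simp
  then show ?thesis using M_ge_2 by (auto dest: bspec[of _ _ M])
qed

text \<open>The \<open>L\<close> labels at level \<open>M\<close> compose to the \<open>L\<close> cells of \<open>D\<close> at level \<open>M\<close>,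
  and none of them is empty there.\<close>
lemma decomposition_label_len_M:
  assumes "1 \<le> a" "a \<le> L"
  shows "len (lab y M a) M = 1"
proof (rule sum_eq_card_imp_eq_1[of "{1..<Suc L}" "\<lambda>a. len (lab y M a) M"])
  have "L = len (mu y) M" using decomposition_mu unfolding L_def by simp
  also have "\<dots> = (\<Sum>a\<in>{1..<Suc L}. len (lab y M a) M)"
    using decomposition_len_M decomposition_dim L_gt_1 M_le_k by (simp add: off_def)
  finally show "(\<Sum>a\<in>{1..<Suc L}. len (lab y M a) M) = card {1..<Suc L}" by simp
qed (use assms decomposition_label_len_pos in auto)

lemma decomposition_block_shaped: "block_shaped M y"
  unfolding block_shaped_def
  using lwfD(3)[OF decomposition_lwf] decomposition_dim decomposition_len decomp_len_simps(2)
    decomposition_len_M decomposition_label_len_M by auto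

lemma decomposition_vmap_Suc_M:
  assumes "M < k"
  shows "vmap y (Suc M) 1 = p"
proof -
  let ?q = "vmap y (Suc M) 1"
  have "len y (Suc M) = 1"
    using assms decomposition_len decomp_len_simps(2)[of "Suc M"] by simp
  then have q: "1 \<le> ?q" "?q \<le> L"
    using block_shaped_vmap(2,3)[OF decomposition_block_shaped, of "Suc M" 1] assms
      decomposition_dim decomposition_len_M by auto
  then have "vmap (lab y (Suc M) 1) (Suc M) 1 = 1"
    using decomposition_label_Suc_M(2,3)[OF assms] decomposition_label_len_M[OF q] by simp
  then show ?thesis
    using mu_block_other(1)[OF decomposition_block_shaped, of "Suc M" 1] decomposition_mu q
      decomposition_label_Suc_M(1)[OF assms] assms decomposition_dim
    by (simp add: p_def)
qed

lemma decomposition_vmap: "vmap y = vmap decomp"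
proof (intro ext)
  fix m a
  show "vmap y m a = vmap decomp m a"
    using block_shaped_vmap(1)[OF decomposition_block_shaped, of m a] decomposition_vmap_Suc_M
      canonicalD(3)[OF lwfD(2)[OF decomposition_lwf], of m a] decomposition_dim decomposition_len
      decomp_len_simps(2)[of m]
    by auto
qed

lemma decomposition_unique: "y = decomp"
  using block_shaped_mu_inj[OF decomposition_lwf decomp_lwf decomposition_block_shaped
      decomp_block_shaped] decomposition_len decomposition_vmap decomposition_mu mu_decomp
  by simp

end

end

theorem mainTheorem6:
  fixes X :: "'a gset" and n k :: nat and D :: "'a ldiag"
  assumes "globular n X" and "k \<le> n"
    and "D \<in> cells (TD X) k"
    and "nontrivial D" and "\<not> is_block D"
  shows "\<exists>!y. y \<in> cells (TD (TD X)) k \<and> is_block y \<and> mu y = D \<and>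
           (\<forall>j\<in>{1..len y (Mlev y)}. nontrivial (minlab y j) \<and> Mlev (minlab y j) < Mlev D) \<and>
           mlev y = Mlev D \<and>
           len y (Mlev y) = len D (Mlev D)"
proof -
  interpret nonblock_diagram X n k D
    using assms by unfold_locales simp_all
  have "\<exists>!y. decomposition y"
    using decomposition_decomp decomposition_unique by blast
  then show ?thesis unfolding decomposition_def .
qed

end
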